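(* Let $\epsilon\in\{0,\frac12\}$. Every local automorphism of $\mathrm{SVir}[\epsilon]$ is an automorphism of $\mathrm{SVir}[\epsilon]$.
   Context: For $\epsilon\in\{0,\frac12\}$, the super Virasoro algebra $\mathrm{SVir}[\epsilon]$ is the Lie superalgebra over $\mathbb{C}$ with basis $\{L_m, G_r, C : m\in\mathbb{Z}, r\in\mathbb{Z}+\epsilon\}$, even part spanned by the $L_m$ and $C$, odd part spanned by the $G_r$, and brackets $[L_m,L_n]=(m-n)L_{m+n}+\frac{1}{12}\delta_{m+n,0}(m^3-m)C$, $[L_m,G_r]=(\frac m2-r)G_{m+r}$, $[G_r,G_s]=2L_{r+s}+\frac13\delta_{r+s,0}(r^2-\frac14)C$, with $C$ central. An automorphism is an even bijective linear map preserving the bracket. A linear map $\phi:L\to L$ is a local automorphism if for every $x\in L$ there is an automorphism $\theta_x$ of $L$ with $\phi(x)=\theta_x(x)$. *)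

theory Defs
  imports Complex_Main
begin

text \<open>An element of SVir[eps] is represented by its coordinates in the basis
  L_m (m integer), G_r (r in Z + eps, r stored as a real number), C:
  a triple (a, b, c) with a m the coefficient of L_m, b r that of G_r, c that of C.\<close>

type_synonym svel = "(int \<Rightarrow> complex) \<times> (real \<Rightarrow> complex) \<times> complex"

definition Lco :: "svel \<Rightarrow> int \<Rightarrow> complex" where "Lco x = fst x"
definition Gco :: "svel \<Rightarrow> real \<Rightarrow> complex" where "Gco x = fst (snd x)"
definition Cco :: "svel \<Rightarrow> complex" where "Cco x = snd (snd x)"

definition SVir :: "real \<Rightarrow> svel set" where
  "SVir eps = {x. finite {m. Lco x m \<noteq> 0} \<and> finite {r. Gco x r \<noteq> 0}
                  \<and> (\<forall>r. Gco x r \<noteq> 0 \<longrightarrow> r - eps \<in> \<int>)}"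

definition sv_add :: "svel \<Rightarrow> svel \<Rightarrow> svel" where
  "sv_add x y = ((\<lambda>m. Lco x m + Lco y m), (\<lambda>r. Gco x r + Gco y r), Cco x + Cco y)"

definition sv_scale :: "complex \<Rightarrow> svel \<Rightarrow> svel" where
  "sv_scale k x = ((\<lambda>m. k * Lco x m), (\<lambda>r. k * Gco x r), k * Cco x)"

text \<open>The super bracket, i.e. the bilinear extension of
  [L_m,L_n] = (m-n)L_{m+n} + delta_{m+n,0}(m^3-m)/12 C,
  [L_m,G_r] = (m/2-r)G_{m+r}, [G_r,L_m] = -(m/2-r)G_{m+r},
  [G_r,G_s] = 2L_{r+s} + delta_{r+s,0}(r^2-1/4)/3 C, C central.\<close>

definition sv_bracket :: "svel \<Rightarrow> svel \<Rightarrow> svel" where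
  "sv_bracket x y =
    ((\<lambda>n. (\<Sum>m\<in>{m. Lco x m \<noteq> 0}. Lco x m * Lco y (n - m) * of_int (m - (n - m)))
         + (\<Sum>r\<in>{r. Gco x r \<noteq> 0}. 2 * Gco x r * Gco y (of_int n - r))),
     (\<lambda>t. (\<Sum>m\<in>{m. Lco x m \<noteq> 0}. Lco x m * Gco y (t - of_int m)
                                        * complex_of_real (of_int m / 2 - (t - of_int m)))
         - (\<Sum>n\<in>{n. Lco y n \<noteq> 0}. Lco y n * Gco x (t - of_int n)
                                        * complex_of_real (of_int n / 2 - (t - of_int n)))),
     (\<Sum>m\<in>{m. Lco x m \<noteq> 0}. Lco x m * Lco y (- m) * of_int (m ^ 3 - m) / 12)
     + (\<Sum>r\<in>{r. Gco x r \<noteq> 0}. Gco x r * Gco y (- r) * complex_of_real ((r ^ 2 - 1 / 4) / 3)))"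

definition sv_linear :: "real \<Rightarrow> (svel \<Rightarrow> svel) \<Rightarrow> bool" where
  "sv_linear eps f \<longleftrightarrow> (\<forall>x\<in>SVir eps. f x \<in> SVir eps)
     \<and> (\<forall>x\<in>SVir eps. \<forall>y\<in>SVir eps. f (sv_add x y) = sv_add (f x) (f y))
     \<and> (\<forall>k. \<forall>x\<in>SVir eps. f (sv_scale k x) = sv_scale k (f x))"

definition sv_even :: "real \<Rightarrow> svel set" where
  "sv_even eps = {x\<in>SVir eps. \<forall>r. Gco x r = 0}"
definition sv_odd :: "real \<Rightarrow> svel set" where
  "sv_odd eps = {x\<in>SVir eps. (\<forall>m. Lco x m = 0) \<and> Cco x = 0}"

definition sv_aut :: "real \<Rightarrow> (svel \<Rightarrow> svel) \<Rightarrow> bool" where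
  "sv_aut eps f \<longleftrightarrow> sv_linear eps f \<and> bij_betw f (SVir eps) (SVir eps)
     \<and> f ` sv_even eps \<subseteq> sv_even eps \<and> f ` sv_odd eps \<subseteq> sv_odd eps
     \<and> (\<forall>x\<in>SVir eps. \<forall>y\<in>SVir eps. f (sv_bracket x y) = sv_bracket (f x) (f y))"

definition sv_local_aut :: "real \<Rightarrow> (svel \<Rightarrow> svel) \<Rightarrow> bool" where
  "sv_local_aut eps f \<longleftrightarrow> sv_linear eps f
     \<and> (\<forall>x\<in>SVir eps. \<exists>\<theta>. sv_aut eps \<theta> \<and> f x = \<theta> x)"

end

theory Submission
  imports Defs
begin

text \<open>An automorphism \<open>\<theta>\<close> is diagonal up to a sign \<open>k = \<plusminus>1\<close>: \<open>\<theta>(L_m) \<in> \<complex>L_{km}\<close>,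
  \<open>\<theta>(G_r) \<in> \<complex>G_{kr}\<close>, \<open>\<theta>(C) \<in> \<complex>C\<close>.  Indeed the images of the basis are eigenvectors of
  \<open>ad \<theta>(L_0)\<close>, which by a degree argument and surjectivity forces \<open>\<theta>(L_0) \<in> span {L_0, C}\<close>,
  and then the eigenvalues pin down the degrees.  Testing a local automorphism \<open>\<phi>\<close> on \<open>L_0\<close> and
  on the \<open>L_0 + b\<close> for basis vectors \<open>b\<close> shows that \<open>\<phi>\<close> is diagonal with one sign \<open>k\<close> and nonzero
  coefficients, hence bijective.  Finally, testing \<open>\<phi>\<close> on a vector with coefficient \<open>1\<close> on all basis
  vectors involved in \<open>x\<close>, \<open>y\<close> and \<open>[x, y]\<close> yields one automorphism agreeing with \<open>\<phi>\<close> on all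
  three, which gives \<open>\<phi>([x, y]) = [\<phi>(x), \<phi>(y)]\<close>.\<close>

definition sv_zero :: svel where "sv_zero = ((\<lambda>_. 0), (\<lambda>_. 0), 0)"
definition sv_L :: "int \<Rightarrow> svel" where "sv_L m = ((\<lambda>n. if n = m then 1 else 0), (\<lambda>_. 0), 0)"
definition sv_G :: "real \<Rightarrow> svel" where "sv_G r = ((\<lambda>_. 0), (\<lambda>t. if t = r then 1 else 0), 0)"
definition sv_C :: svel where "sv_C = ((\<lambda>_. 0), (\<lambda>_. 0), 1)"

lemma sv_coord_simps [simp]:
  "Lco (sv_add x y) m = Lco x m + Lco y m" "Gco (sv_add x y) r = Gco x r + Gco y r"
  "Cco (sv_add x y) = Cco x + Cco y"
  "Lco (sv_scale k x) m = k * Lco x m" "Gco (sv_scale k x) r = k * Gco x r"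
  "Cco (sv_scale k x) = k * Cco x"
  "Lco sv_zero m = 0" "Gco sv_zero r = 0" "Cco sv_zero = 0"
  "Lco (sv_L j) m = (if m = j then 1 else 0)" "Gco (sv_L j) r = 0" "Cco (sv_L j) = 0"
  "Lco (sv_G s) m = 0" "Gco (sv_G s) r = (if r = s then 1 else 0)" "Cco (sv_G s) = 0"
  "Lco sv_C m = 0" "Gco sv_C r = 0" "Cco sv_C = 1"
  "Lco (a, b, c) = a" "Gco (a, b, c) = b" "Cco (a, b, c) = c"
  by (auto simp: sv_add_def sv_scale_def Lco_def Gco_def Cco_def sv_zero_def sv_L_def sv_G_def sv_C_def)

lemma sv_eqI:
  "(\<And>m. Lco x m = Lco y m) \<Longrightarrow> (\<And>r. Gco x r = Gco y r) \<Longrightarrow> Cco x = Cco y \<Longrightarrow> x = y"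
  unfolding Lco_def Gco_def Cco_def by (simp add: prod_eq_iff fun_eq_iff)

lemma sv_eq_iff: "x = y \<longleftrightarrow> (\<forall>m. Lco x m = Lco y m) \<and> (\<forall>r. Gco x r = Gco y r) \<and> Cco x = Cco y"
  by (auto intro: sv_eqI)

lemma sv_basis_ne_zero [simp]: "sv_L m \<noteq> sv_zero" "sv_G r \<noteq> sv_zero" "sv_C \<noteq> sv_zero"
  by (auto simp: sv_eq_iff)

lemma sv_scale_zero: "sv_scale 0 x = sv_zero"
  by (rule sv_eqI) auto

lemma SVirI:
  "finite {m. Lco x m \<noteq> 0} \<Longrightarrow> finite {r. Gco x r \<noteq> 0} \<Longrightarrow> (\<And>r. Gco x r \<noteq> 0 \<Longrightarrow> r - eps \<in> \<int>)
    \<Longrightarrow> x \<in> SVir eps"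
  unfolding SVir_def by auto

lemma SVirD:
  assumes "x \<in> SVir eps"
  shows "finite {m. Lco x m \<noteq> 0}" "finite {r. Gco x r \<noteq> 0}" "Gco x r \<noteq> 0 \<Longrightarrow> r - eps \<in> \<int>"
  using assms unfolding SVir_def by auto

lemma sv_zero_in_SVir [simp]: "sv_zero \<in> SVir eps"
  and sv_L_in_SVir [simp]: "sv_L m \<in> SVir eps"
  and sv_C_in_SVir [simp]: "sv_C \<in> SVir eps"
  and sv_G_in_SVir [simp]: "r - eps \<in> \<int> \<Longrightarrow> sv_G r \<in> SVir eps"
  by (rule SVirI; auto split: if_splits)+

lemma sv_add_in_SVir [simp]:
  assumes x: "x \<in> SVir eps" and y: "y \<in> SVir eps"
  shows "sv_add x y \<in> SVir eps"
proof (rule SVirI)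
  show "finite {m. Lco (sv_add x y) m \<noteq> 0}"
    by (rule finite_subset[of _ "{m. Lco x m \<noteq> 0} \<union> {m. Lco y m \<noteq> 0}"])
      (use SVirD[OF x] SVirD[OF y] in auto)
  show "finite {r. Gco (sv_add x y) r \<noteq> 0}"
    by (rule finite_subset[of _ "{r. Gco x r \<noteq> 0} \<union> {r. Gco y r \<noteq> 0}"])
      (use SVirD[OF x] SVirD[OF y] in auto)
  show "r - eps \<in> \<int>" if "Gco (sv_add x y) r \<noteq> 0" for r
    using that SVirD(3)[OF x] SVirD(3)[OF y] by (cases "Gco x r = 0") auto
qed

lemma sv_scale_in_SVir [simp]:
  assumes x: "x \<in> SVir eps"
  shows "sv_scale k x \<in> SVir eps"
proof (rule SVirI)
  show "finite {m. Lco (sv_scale k x) m \<noteq> 0}"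
    by (rule finite_subset[of _ "{m. Lco x m \<noteq> 0}"]) (use SVirD[OF x] in auto)
  show "finite {r. Gco (sv_scale k x) r \<noteq> 0}"
    by (rule finite_subset[of _ "{r. Gco x r \<noteq> 0}"]) (use SVirD[OF x] in auto)
  show "r - eps \<in> \<int>" if "Gco (sv_scale k x) r \<noteq> 0" for r
    using that SVirD(3)[OF x] by auto
qed

definition sv_basis :: "real \<Rightarrow> svel set" where
  "sv_basis eps = range sv_L \<union> sv_G ` {r. r - eps \<in> \<int>} \<union> {sv_C}"

lemma sv_basisE:
  assumes "b \<in> sv_basis eps"
  obtains (L) m where "b = sv_L m" | (G) r where "b = sv_G r" "r - eps \<in> \<int>" | (C) "b = sv_C"
  using assms unfolding sv_basis_def by blast

lemma sv_basisI [simp]: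
  "sv_L m \<in> sv_basis eps" "sv_C \<in> sv_basis eps" "r - eps \<in> \<int> \<Longrightarrow> sv_G r \<in> sv_basis eps"
  by (simp_all add: sv_basis_def)

lemma sv_basis_in_SVir: "b \<in> sv_basis eps \<Longrightarrow> b \<in> SVir eps"
  by (auto elim: sv_basisE)

lemma sv_basis_nonzero: "b \<in> sv_basis eps \<Longrightarrow> b \<noteq> sv_zero"
  by (erule sv_basisE) simp_all

definition sv_support_size :: "svel \<Rightarrow> nat" where
  "sv_support_size y =
     card {m. Lco y m \<noteq> 0} + card {r. Gco y r \<noteq> 0} + (if Cco y = 0 then 0 else 1)"

lemma sv_split_off_basis_term:
  assumes y: "y \<in> SVir eps" and y0: "y \<noteq> sv_zero"
  obtains b c x where "b \<in> sv_basis eps" "x \<in> SVir eps" "y = sv_add (sv_scale c b) x"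
    "sv_support_size x < sv_support_size y"
proof -
  note fin = SVirD[OF y]
  define rest where "rest b c = sv_add y (sv_scale (- c) b)" for b c
  have rest_in: "rest b c \<in> SVir eps" if "b \<in> sv_basis eps" for b c
    using y sv_basis_in_SVir[OF that] by (simp add: rest_def)
  have rest_eq: "y = sv_add (sv_scale c b) (rest b c)" for b c
    by (rule sv_eqI) (simp_all add: rest_def)
  consider (L) m where "Lco y m \<noteq> 0" | (G) r where "Gco y r \<noteq> 0" | (C) "Cco y \<noteq> 0"
    using y0 by (auto simp: sv_eq_iff)
  then show thesis
  proof cases
    case (L m)
    have "{n. Lco (rest (sv_L m) (Lco y m)) n \<noteq> 0} = {n. Lco y n \<noteq> 0} - {m}"
      by (auto simp: rest_def)
    then have "sv_support_size (rest (sv_L m) (Lco y m)) < sv_support_size y"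
      using card_Diff1_less[OF fin(1), of m] L by (simp add: sv_support_size_def rest_def)
    then show thesis using that[OF _ _ rest_eq] rest_in by (meson sv_basisI)
  next
    case (G r)
    have "{t. Gco (rest (sv_G r) (Gco y r)) t \<noteq> 0} = {t. Gco y t \<noteq> 0} - {r}"
      by (auto simp: rest_def)
    then have "sv_support_size (rest (sv_G r) (Gco y r)) < sv_support_size y"
      using card_Diff1_less[OF fin(2), of r] G by (simp add: sv_support_size_def rest_def)
    then show thesis using that[OF _ _ rest_eq] rest_in fin(3)[OF G] by (meson sv_basisI)
  next
    case C
    then have "sv_support_size (rest sv_C (Cco y)) < sv_support_size y"
      by (simp add: sv_support_size_def rest_def)
    then show thesis using that[OF _ _ rest_eq] rest_in by (meson sv_basisI)
  qed
qed

lemma SVir_induct [consumes 1, case_names zero add_basis]: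
  assumes y: "y \<in> SVir eps" and zero: "P sv_zero"
    and add_basis: "\<And>x b c. x \<in> SVir eps \<Longrightarrow> b \<in> sv_basis eps \<Longrightarrow> P x \<Longrightarrow> P (sv_add (sv_scale c b) x)"
  shows "P y"
  using y
proof (induction "sv_support_size y" arbitrary: y rule: less_induct)
  case less
  show ?case
  proof (cases "y = sv_zero")
    case False
    then obtain b c x where "b \<in> sv_basis eps" "x \<in> SVir eps" "y = sv_add (sv_scale c b) x"
      "sv_support_size x < sv_support_size y"
      using sv_split_off_basis_term[OF less.prems] by blast
    then show ?thesis using less.hyps add_basis by blast
  qed (use zero in simp)
qed

lemma sv_linearD:
  assumes "sv_linear eps f"
  shows "x \<in> SVir eps \<Longrightarrow> f x \<in> SVir eps"
    and "x \<in> SVir eps \<Longrightarrow> y \<in> SVir eps \<Longrightarrow> f (sv_add x y) = sv_add (f x) (f y)"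
    and "x \<in> SVir eps \<Longrightarrow> f (sv_scale k x) = sv_scale k (f x)"
  using assms unfolding sv_linear_def by auto

lemma sv_linear_zero: "sv_linear eps f \<Longrightarrow> f sv_zero = sv_zero"
  using sv_linearD(3)[of eps f sv_zero 0] by (simp add: sv_scale_zero)

lemma sv_linear_image_induct [consumes 2, case_names zero add scale basis]:
  assumes f: "sv_linear eps f" and y: "y \<in> SVir eps" and P0: "P sv_zero"
    and P_add: "\<And>u v. P u \<Longrightarrow> P v \<Longrightarrow> P (sv_add u v)"
    and P_scale: "\<And>u k. P u \<Longrightarrow> P (sv_scale k u)"
    and P_basis: "\<And>b. b \<in> sv_basis eps \<Longrightarrow> P (f b)"
  shows "P (f y)"
  using y
proof (induction rule: SVir_induct)
  case zero
  show ?case using P0 sv_linear_zero[OF f] by simp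
next
  case (add_basis x b c)
  then show ?case
    using P_add P_scale P_basis sv_basis_in_SVir by (simp add: sv_linearD[OF f])
qed

lemma Lco_sv_bracket:
  "Lco (sv_bracket x y) n =
     (\<Sum>m\<in>{m. Lco x m \<noteq> 0}. Lco x m * Lco y (n - m) * of_int (m - (n - m)))
     + (\<Sum>r\<in>{r. Gco x r \<noteq> 0}. 2 * Gco x r * Gco y (of_int n - r))"
  and Gco_sv_bracket:
  "Gco (sv_bracket x y) t =
     (\<Sum>m\<in>{m. Lco x m \<noteq> 0}. Lco x m * Gco y (t - of_int m) * complex_of_real (of_int m / 2 - (t - of_int m)))
     - (\<Sum>n\<in>{n. Lco y n \<noteq> 0}. Lco y n * Gco x (t - of_int n) * complex_of_real (of_int n / 2 - (t - of_int n)))"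
  and Cco_sv_bracket:
  "Cco (sv_bracket x y) =
     (\<Sum>m\<in>{m. Lco x m \<noteq> 0}. Lco x m * Lco y (- m) * of_int (m ^ 3 - m) / 12)
     + (\<Sum>r\<in>{r. Gco x r \<noteq> 0}. Gco x r * Gco y (- r) * complex_of_real ((r ^ 2 - 1 / 4) / 3))"
  by (simp_all add: sv_bracket_def)

lemma sum_nonzero_support_subset_singleton:
  fixes a :: "'a \<Rightarrow> complex"
  assumes "{m. a m \<noteq> 0} \<subseteq> {j}"
  shows "(\<Sum>m\<in>{m. a m \<noteq> 0}. a m * g m) = a j * g j"
proof (cases "a j = 0")
  case True
  then have "{m. a m \<noteq> 0} = {}" using assms by auto
  then show ?thesis using True by simp
next
  case False
  then have "{m. a m \<noteq> 0} = {j}" using assms by auto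
  then show ?thesis by simp
qed

lemma sum_nonzero_ex: "(\<Sum>x\<in>A. g x) \<noteq> (0::complex) \<Longrightarrow> \<exists>x\<in>A. g x \<noteq> 0"
  by (rule ccontr) simp

lemma add_nonzero_either: "a + b \<noteq> (0::complex) \<Longrightarrow> a \<noteq> 0 \<or> b \<noteq> 0"
  and diff_nonzero_either: "a - b \<noteq> (0::complex) \<Longrightarrow> a \<noteq> 0 \<or> b \<noteq> 0"
  by auto

lemma Lco_sv_bracket_nonzero:
  assumes "Lco (sv_bracket x y) n \<noteq> 0"
  obtains m where "Lco x m \<noteq> 0" "Lco y (n - m) \<noteq> 0"
    | r where "Gco x r \<noteq> 0" "Gco y (of_int n - r) \<noteq> 0"
  using assms unfolding Lco_sv_bracket by (fastforce dest!: sum_nonzero_ex add_nonzero_either)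

lemma Gco_sv_bracket_nonzero:
  assumes "Gco (sv_bracket x y) t \<noteq> 0"
  obtains m where "Lco x m \<noteq> 0" "Gco y (t - of_int m) \<noteq> 0"
    | m where "Lco y m \<noteq> 0" "Gco x (t - of_int m) \<noteq> 0"
  using assms unfolding Gco_sv_bracket by (fastforce dest!: sum_nonzero_ex diff_nonzero_either)

lemma SVir_bracket_closed:
  assumes x: "x \<in> SVir eps" and y: "y \<in> SVir eps"
  shows "sv_bracket x y \<in> SVir eps"
proof (rule SVirI)
  note X = SVirD[OF x] and Y = SVirD[OF y]
  let ?LL = "(\<lambda>(m, j). m + j) ` ({m. Lco x m \<noteq> 0} \<times> {m. Lco y m \<noteq> 0})"
  let ?GG = "(\<lambda>(r, s). r + s) ` ({r. Gco x r \<noteq> 0} \<times> {r. Gco y r \<noteq> 0})"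
  let ?LG = "(\<lambda>(m, s). of_int m + s) ` ({m. Lco x m \<noteq> 0} \<times> {r. Gco y r \<noteq> 0}
              \<union> {m. Lco y m \<noteq> 0} \<times> {r. Gco x r \<noteq> 0})"
  have "finite (of_int -` ?GG :: int set)"
    by (rule finite_vimageI) (use X Y in \<open>auto simp: inj_on_def\<close>)
  moreover have "{n. Lco (sv_bracket x y) n \<noteq> 0} \<subseteq> ?LL \<union> of_int -` ?GG"
  proof
    fix n assume "n \<in> {n. Lco (sv_bracket x y) n \<noteq> 0}"
    then show "n \<in> ?LL \<union> of_int -` ?GG"
      by (auto elim!: Lco_sv_bracket_nonzero intro: image_eqI[where x = "(m, n - m)" for m]
          image_eqI[where x = "(r, of_int n - r)" for r])
  qed
  ultimately show "finite {n. Lco (sv_bracket x y) n \<noteq> 0}"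
    using X Y by (meson finite_SigmaI finite_UnI finite_imageI finite_subset)
  have G_support: "{t. Gco (sv_bracket x y) t \<noteq> 0} \<subseteq> ?LG"
    by (force elim!: Gco_sv_bracket_nonzero intro: image_eqI[where x = "(m, t - of_int m)" for m t])
  then show "finite {t. Gco (sv_bracket x y) t \<noteq> 0}"
    by (rule finite_subset) (use X Y in auto)
  fix t assume "Gco (sv_bracket x y) t \<noteq> 0"
  then obtain m s where t: "t = of_int m + s" and "Gco y s \<noteq> 0 \<or> Gco x s \<noteq> 0"
    using G_support by auto
  then have "of_int m + (s - eps) \<in> \<int>" using X(3) Y(3) by (intro Ints_add) auto
  then show "t - eps \<in> \<int>" using t by (simp add: algebra_simps)
qed

definition sv_Cartan :: "svel \<Rightarrow> bool" where
  "sv_Cartan h \<longleftrightarrow> (\<forall>r. Gco h r = 0) \<and> (\<forall>m. m \<noteq> 0 \<longrightarrow> Lco h m = 0)"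

lemma sv_Cartan_L0 [simp]: "sv_Cartan (sv_L 0)"
  and sv_Cartan_C [simp]: "sv_Cartan sv_C"
  and sv_Cartan_scale [simp]: "sv_Cartan h \<Longrightarrow> sv_Cartan (sv_scale c h)"
  by (simp_all add: sv_Cartan_def)

lemma sv_bracket_Cartan:
  assumes "sv_Cartan h"
  shows "sv_bracket h v =
    ((\<lambda>n. - Lco h 0 * of_int n * Lco v n), (\<lambda>t. - Lco h 0 * complex_of_real t * Gco v t), 0)"
proof -
  have G: "\<forall>r. Gco h r = 0" and L: "{m. Lco h m \<noteq> 0} \<subseteq> {0}"
    using assms by (auto simp: sv_Cartan_def)
  have sum: "(\<Sum>m\<in>{m. Lco h m \<noteq> 0}. Lco h m * g m) = Lco h 0 * g 0"
    "(\<Sum>m\<in>{m. Lco h m \<noteq> 0}. Lco h m * g m / 12) = Lco h 0 * g 0 / 12" for g :: "int \<Rightarrow> complex"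
    using sum_nonzero_support_subset_singleton[OF L, of "\<lambda>m. g m / 12"]
    by (simp_all add: sum_nonzero_support_subset_singleton[OF L])
  show ?thesis
    by (rule sv_eqI) (simp_all add: Lco_sv_bracket Gco_sv_bracket Cco_sv_bracket G mult.assoc sum)
qed

lemma sv_bracket_L0: "sv_bracket (sv_L 0) v = ((\<lambda>n. - of_int n * Lco v n), (\<lambda>t. - complex_of_real t * Gco v t), 0)"
  using sv_bracket_Cartan[OF sv_Cartan_L0, of v] by simp

lemma sv_bracket_L0_basis:
  "sv_bracket (sv_L 0) (sv_L m) = sv_scale (- of_int m) (sv_L m)"
  "sv_bracket (sv_L 0) (sv_G r) = sv_scale (- complex_of_real r) (sv_G r)"
  "sv_bracket (sv_L 0) sv_C = sv_scale 0 sv_C"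
  by (rule sv_eqI; auto simp: sv_bracket_L0)+

lemma sv_bracket_C: "sv_bracket sv_C v = sv_zero"
  using sv_bracket_Cartan[OF sv_Cartan_C, of v] by (auto intro: sv_eqI)

lemma sv_bracket_L1_Lm1: "sv_bracket (sv_L 1) (sv_L (-1)) = sv_scale 2 (sv_L 0)"
proof -
  have "{m. Lco (sv_L 1) m \<noteq> 0} = {1}" by auto
  then show ?thesis by (intro sv_eqI) (simp_all add: Lco_sv_bracket Gco_sv_bracket Cco_sv_bracket)
qed

text \<open>The central term \<open>(m^3 - m)/12\<close> of \<open>[L_m, L_{-m}]\<close> vanishes for \<open>m = \<plusminus>1\<close>.\<close>

lemma Cco_sv_bracket_L_pm1:
  assumes G: "\<forall>r. Gco x r = 0" and L: "{m. Lco x m \<noteq> 0} \<subseteq> {s}" and s: "s = 1 \<or> s = -1"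
  shows "Cco (sv_bracket x y) = 0"
proof -
  have "Cco (sv_bracket x y) = (\<Sum>m\<in>{m. Lco x m \<noteq> 0}. Lco x m * (Lco y (- m) * of_int (m ^ 3 - m) / 12))"
    by (simp add: Cco_sv_bracket G mult.assoc)
  also have "\<dots> = 0" using s by (subst sum_nonzero_support_subset_singleton[OF L]) auto
  finally show ?thesis .
qed

lemma Lco_sv_bracket_isolated_term:
  assumes G: "\<forall>r. Gco h r = 0" and fin: "finite {m. Lco h m \<noteq> 0}"
    and isolated: "\<And>m. Lco h m \<noteq> 0 \<Longrightarrow> m \<noteq> M \<Longrightarrow> Lco v (M + N - m) = 0"
  shows "Lco (sv_bracket h v) (M + N) = Lco h M * Lco v N * of_int (M - N)"
proof -
  let ?g = "\<lambda>m. Lco h m * Lco v (M + N - m) * of_int (m - (M + N - m))"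
  have "(\<Sum>m\<in>{m. Lco h m \<noteq> 0}. ?g m) = (\<Sum>m\<in>{m. Lco h m \<noteq> 0}. if m = M then ?g M else 0)"
    by (rule sum.cong) (auto simp: isolated)
  also have "\<dots> = ?g M" using fin by simp
  finally show ?thesis by (simp add: Lco_sv_bracket G)
qed

text \<open>If \<open>v\<close> reached above the top degree \<open>M > 0\<close> of \<open>h\<close>, the coefficient of \<open>[h, v]\<close> in degree
  \<open>M + (top degree of v)\<close> would be a single nonzero product, while for an eigenvector it vanishes.\<close>

lemma ad_eigenvector_Lco_above:
  assumes G: "\<forall>r. Gco h r = 0" and fin_h: "finite {m. Lco h m \<noteq> 0}"
    and hM: "Lco h M \<noteq> 0" and M_max: "\<And>m. Lco h m \<noteq> 0 \<Longrightarrow> m \<le> M" and M_pos: "0 < M"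
    and eig: "sv_bracket h v = sv_scale c v" and fin_v: "finite {m. Lco v m \<noteq> 0}"
    and N: "M < N"
  shows "Lco v N = 0"
proof (rule ccontr)
  assume "Lco v N \<noteq> 0"
  define N' where "N' = Max {m. Lco v m \<noteq> 0}"
  have "N \<le> N'" using \<open>Lco v N \<noteq> 0\<close> fin_v unfolding N'_def by simp
  have vN': "Lco v N' \<noteq> 0"
    using \<open>Lco v N \<noteq> 0\<close> fin_v unfolding N'_def by (metis (mono_tags) Max_in empty_iff mem_Collect_eq)
  have above: "Lco v j = 0" if "N' < j" for j
    using that fin_v unfolding N'_def by (metis (mono_tags) Max_ge mem_Collect_eq not_le)
  have "Lco (sv_bracket h v) (M + N') = Lco h M * Lco v N' * of_int (M - N')"
    by (rule Lco_sv_bracket_isolated_term[OF G fin_h]) (auto intro!: above dest: M_max)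
  moreover have "Lco (sv_bracket h v) (M + N') = 0" using eig above[of "M + N'"] M_pos by simp
  ultimately show False using hM vN' N \<open>N \<le> N'\<close> by simp
qed

lemma ad_eigenvector_Lco_below:
  assumes G: "\<forall>r. Gco h r = 0" and fin_h: "finite {m. Lco h m \<noteq> 0}"
    and hM: "Lco h M \<noteq> 0" and M_min: "\<And>m. Lco h m \<noteq> 0 \<Longrightarrow> M \<le> m" and M_neg: "M < 0"
    and eig: "sv_bracket h v = sv_scale c v" and fin_v: "finite {m. Lco v m \<noteq> 0}"
    and N: "N < M"
  shows "Lco v N = 0"
proof (rule ccontr)
  assume "Lco v N \<noteq> 0"
  define N' where "N' = Min {m. Lco v m \<noteq> 0}"
  have "N' \<le> N" using \<open>Lco v N \<noteq> 0\<close> fin_v unfolding N'_def by simp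
  have vN': "Lco v N' \<noteq> 0"
    using \<open>Lco v N \<noteq> 0\<close> fin_v unfolding N'_def by (metis (mono_tags) Min_in empty_iff mem_Collect_eq)
  have below: "Lco v j = 0" if "j < N'" for j
    using that fin_v unfolding N'_def by (metis (mono_tags) Min_le mem_Collect_eq not_le)
  have "Lco (sv_bracket h v) (M + N') = Lco h M * Lco v N' * of_int (M - N')"
    by (rule Lco_sv_bracket_isolated_term[OF G fin_h]) (auto intro!: below dest: M_min)
  moreover have "Lco (sv_bracket h v) (M + N') = 0" using eig below[of "M + N'"] M_neg by simp
  ultimately show False using hM vN' N \<open>N' \<le> N\<close> by simp
qed

lemma Cartan_eigenvector_coords:
  assumes h: "sv_Cartan h" and eig: "sv_bracket h v = sv_scale c v"
  shows "Lco v n \<noteq> 0 \<Longrightarrow> - Lco h 0 * of_int n = c"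
    and "Gco v t \<noteq> 0 \<Longrightarrow> - Lco h 0 * complex_of_real t = c"
    and "Cco v \<noteq> 0 \<Longrightarrow> c = 0"
proof -
  have "(- Lco h 0 * of_int n - c) * Lco v n = 0"
    using arg_cong[OF eig, of "\<lambda>x. Lco x n"] by (simp add: sv_bracket_Cartan[OF h] algebra_simps)
  then show "Lco v n \<noteq> 0 \<Longrightarrow> - Lco h 0 * of_int n = c" by simp
  have "(- Lco h 0 * complex_of_real t - c) * Gco v t = 0"
    using arg_cong[OF eig, of "\<lambda>x. Gco x t"] by (simp add: sv_bracket_Cartan[OF h] algebra_simps)
  then show "Gco v t \<noteq> 0 \<Longrightarrow> - Lco h 0 * complex_of_real t = c" by simp
  show "Cco v \<noteq> 0 \<Longrightarrow> c = 0"
    using arg_cong[OF eig, of Cco] by (simp add: sv_bracket_Cartan[OF h])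
qed

lemma
  assumes "sv_aut eps \<theta>"
  shows sv_aut_linear: "sv_linear eps \<theta>"
    and sv_aut_bracket: "x \<in> SVir eps \<Longrightarrow> y \<in> SVir eps \<Longrightarrow> \<theta> (sv_bracket x y) = sv_bracket (\<theta> x) (\<theta> y)"
    and sv_aut_onto: "z \<in> SVir eps \<Longrightarrow> \<exists>y\<in>SVir eps. \<theta> y = z"
    and sv_aut_even: "x \<in> sv_even eps \<Longrightarrow> \<theta> x \<in> sv_even eps"
    and sv_aut_odd: "x \<in> sv_odd eps \<Longrightarrow> \<theta> x \<in> sv_odd eps"
    and sv_aut_eq_zero: "x \<in> SVir eps \<Longrightarrow> \<theta> x = sv_zero \<Longrightarrow> x = sv_zero"
proof -
  have bij: "bij_betw \<theta> (SVir eps) (SVir eps)" using assms by (simp add: sv_aut_def)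
  show "sv_linear eps \<theta>" using assms by (simp add: sv_aut_def)
  then show "x \<in> SVir eps \<Longrightarrow> \<theta> x = sv_zero \<Longrightarrow> x = sv_zero"
    using bij_betw_imp_inj_on[OF bij] sv_linear_zero by (metis inj_on_def sv_zero_in_SVir)
  show "z \<in> SVir eps \<Longrightarrow> \<exists>y\<in>SVir eps. \<theta> y = z"
    using bij_betw_imp_surj_on[OF bij] by force
qed (use assms in \<open>auto simp: sv_aut_def\<close>)

lemma sv_aut_basis_parity:
  assumes "sv_aut eps \<theta>"
  shows "Gco (\<theta> (sv_L m)) t = 0" and "Gco (\<theta> sv_C) t = 0"
    and "r - eps \<in> \<int> \<Longrightarrow> Lco (\<theta> (sv_G r)) n = 0"
    and "r - eps \<in> \<int> \<Longrightarrow> Cco (\<theta> (sv_G r)) = 0"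
  using sv_aut_even[OF assms, of "sv_L m"] sv_aut_even[OF assms, of sv_C] sv_aut_odd[OF assms, of "sv_G r"]
  by (auto simp: sv_even_def sv_odd_def)

lemma sv_aut_ad_L0_basis:
  assumes "sv_aut eps \<theta>"
  shows "sv_bracket (\<theta> (sv_L 0)) (\<theta> (sv_L m)) = sv_scale (- of_int m) (\<theta> (sv_L m))"
    and "r - eps \<in> \<int> \<Longrightarrow>
      sv_bracket (\<theta> (sv_L 0)) (\<theta> (sv_G r)) = sv_scale (- complex_of_real r) (\<theta> (sv_G r))"
    and "sv_bracket (\<theta> (sv_L 0)) (\<theta> sv_C) = sv_scale 0 (\<theta> sv_C)"
  using sv_bracket_L0_basis sv_aut_bracket[OF assms] sv_linearD(3)[OF sv_aut_linear[OF assms]]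
  by (metis sv_L_in_SVir, metis sv_L_in_SVir sv_G_in_SVir, metis sv_L_in_SVir sv_C_in_SVir)

lemma sv_aut_basis_ad_L0_eigenvector:
  assumes aut: "sv_aut eps \<theta>" and b: "b \<in> sv_basis eps"
  shows "\<exists>c. sv_bracket (\<theta> (sv_L 0)) (\<theta> b) = sv_scale c (\<theta> b)"
  using b by (cases rule: sv_basisE) (auto simp: sv_aut_ad_L0_basis[OF aut])

lemma sv_aut_image_Lco_above:
  assumes aut: "sv_aut eps \<theta>" and y: "y \<in> SVir eps"
    and top: "Lco (\<theta> (sv_L 0)) M \<noteq> 0" "\<And>m. Lco (\<theta> (sv_L 0)) m \<noteq> 0 \<Longrightarrow> m \<le> M" and M: "0 < M"
  shows "\<forall>N > M. Lco (\<theta> y) N = 0"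
  using sv_aut_linear[OF aut] y
proof (induction rule: sv_linear_image_induct)
  case (basis b)
  note fin = SVirD(1)[OF sv_linearD(1)[OF sv_aut_linear[OF aut]]]
  obtain c where "sv_bracket (\<theta> (sv_L 0)) (\<theta> b) = sv_scale c (\<theta> b)"
    using sv_aut_basis_ad_L0_eigenvector[OF aut basis] by blast
  moreover have "\<forall>r. Gco (\<theta> (sv_L 0)) r = 0" by (simp add: sv_aut_basis_parity[OF aut])
  ultimately show ?case
    using ad_eigenvector_Lco_above[OF _ fin[of "sv_L 0"] top M _ fin[OF sv_basis_in_SVir[OF basis]]] by simp
qed auto

lemma sv_aut_image_Lco_below:
  assumes aut: "sv_aut eps \<theta>" and y: "y \<in> SVir eps"
    and bottom: "Lco (\<theta> (sv_L 0)) M \<noteq> 0" "\<And>m. Lco (\<theta> (sv_L 0)) m \<noteq> 0 \<Longrightarrow> M \<le> m" and M: "M < 0"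
  shows "\<forall>N < M. Lco (\<theta> y) N = 0"
  using sv_aut_linear[OF aut] y
proof (induction rule: sv_linear_image_induct)
  case (basis b)
  note fin = SVirD(1)[OF sv_linearD(1)[OF sv_aut_linear[OF aut]]]
  obtain c where "sv_bracket (\<theta> (sv_L 0)) (\<theta> b) = sv_scale c (\<theta> b)"
    using sv_aut_basis_ad_L0_eigenvector[OF aut basis] by blast
  moreover have "\<forall>r. Gco (\<theta> (sv_L 0)) r = 0" by (simp add: sv_aut_basis_parity[OF aut])
  ultimately show ?case
    using ad_eigenvector_Lco_below[OF _ fin[of "sv_L 0"] bottom M _ fin[OF sv_basis_in_SVir[OF basis]]] by simp
qed auto

text \<open>A nonzero degree in \<open>\<theta>(L_0)\<close> would bound the degrees of \<open>\<theta>(SVir)\<close> from one side,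
  contradicting surjectivity.\<close>

lemma sv_aut_L0_Cartan:
  assumes aut: "sv_aut eps \<theta>"
  shows "sv_Cartan (\<theta> (sv_L 0))"
proof -
  define h where "h = \<theta> (sv_L 0)"
  define S where "S = {m. Lco h m \<noteq> 0}"
  have fin: "finite S" unfolding S_def h_def
    by (rule SVirD(1)[OF sv_linearD(1)[OF sv_aut_linear[OF aut]]]) simp
  have not_onto: False if bound: "\<And>y. y \<in> SVir eps \<Longrightarrow> Lco (\<theta> y) N = 0" for N
    using sv_aut_onto[OF aut, of "sv_L N"] bound by force
  have "Lco h j = 0" if "j \<noteq> 0" for j
  proof (rule ccontr)
    assume "Lco h j \<noteq> 0"
    then have "j \<in> S" by (simp add: S_def)
    then have "Max S \<in> S" "Min S \<in> S" "Min S \<le> j" "j \<le> Max S" using fin by (auto intro!: Max_in Min_in)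
    then have top: "Lco h (Max S) \<noteq> 0" and bottom: "Lco h (Min S) \<noteq> 0" by (simp_all add: S_def)
    have extreme: "Min S \<le> m" "m \<le> Max S" if "Lco h m \<noteq> 0" for m
      using fin that by (simp_all add: S_def)
    consider "0 < Max S" | "Min S < 0" using \<open>j \<noteq> 0\<close> \<open>Min S \<le> j\<close> \<open>j \<le> Max S\<close> by linarith
    then show False
    proof cases
      case 1
      have "Lco (\<theta> y) (Max S + 1) = 0" if "y \<in> SVir eps" for y
        using sv_aut_image_Lco_above[OF aut that top[unfolded h_def] extreme(2)[unfolded h_def] 1] by simp
      then show False by (rule not_onto)
    next
      case 2
      have "Lco (\<theta> y) (Min S - 1) = 0" if "y \<in> SVir eps" for y
        using sv_aut_image_Lco_below[OF aut that bottom[unfolded h_def] extreme(1)[unfolded h_def] 2] by simp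
      then show False by (rule not_onto)
    qed
  qed
  then show ?thesis by (simp add: sv_Cartan_def h_def sv_aut_basis_parity[OF aut])
qed

lemma int_eq_times_inverse:
  fixes a :: complex
  assumes "a * of_int k = 1" and "a * of_int n = of_int m"
  shows "n = k * m"
proof -
  have "(of_int n :: complex) = of_int k * (a * of_int n)"
    using assms(1) by (simp add: algebra_simps)
  then show ?thesis using assms(2) by (metis of_int_eq_iff of_int_mult)
qed

text \<open>\<open>\<theta>(L_1)\<close> is a nonzero \<open>ad \<theta>(L_0)\<close>-eigenvector; its degree \<open>k\<close> gives \<open>\<theta>(L_0) = (1/k) L_0 + c C\<close>.\<close>

lemma sv_aut_image_degrees:
  assumes aut: "sv_aut eps \<theta>"
  obtains k where "Lco (\<theta> (sv_L 0)) 0 * of_int k = 1"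
    and "\<And>m n. Lco (\<theta> (sv_L m)) n \<noteq> 0 \<Longrightarrow> n = k * m"
    and "\<And>n. Lco (\<theta> sv_C) n \<noteq> 0 \<Longrightarrow> n = 0"
proof -
  note parity = sv_aut_basis_parity[OF aut] and ad_L0 = sv_aut_ad_L0_basis[OF aut]
  note eigen = Cartan_eigenvector_coords[OF sv_aut_L0_Cartan[OF aut]]
  have eigen_L: "Lco (\<theta> (sv_L 0)) 0 * of_int n = of_int m" if "Lco (\<theta> (sv_L m)) n \<noteq> 0" for m n
    using eigen(1)[OF ad_L0(1) that] by simp
  have "\<theta> (sv_L 1) \<noteq> sv_zero" using sv_aut_eq_zero[OF aut, of "sv_L 1"] by auto
  moreover have "Cco (\<theta> (sv_L 1)) = 0" using eigen(3)[OF ad_L0(1), of 1] by auto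
  ultimately obtain k where "Lco (\<theta> (sv_L 1)) k \<noteq> 0" by (auto simp: sv_eq_iff parity)
  then have ak: "Lco (\<theta> (sv_L 0)) 0 * of_int k = 1" using eigen_L by simp
  moreover have "n = k * m" if "Lco (\<theta> (sv_L m)) n \<noteq> 0" for m n
    by (rule int_eq_times_inverse[OF ak eigen_L[OF that]])
  moreover have "n = 0" if "Lco (\<theta> sv_C) n \<noteq> 0" for n
    using eigen(1)[OF ad_L0(3) that] ak by auto
  ultimately show thesis by (rule that)
qed

text \<open>All degrees of \<open>\<theta>(SVir)\<close> are multiples of \<open>k\<close> and \<open>L_1\<close> is in the image, so \<open>k = \<plusminus>1\<close>.
  The central part of \<open>\<theta>(L_0) = \<theta>([L_1, L_{-1}])/2\<close> vanishes because \<open>\<theta>(L_{\<plusminus>1})\<close> have degree \<open>\<plusminus>1\<close>.\<close>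

lemma sv_aut_L0:
  assumes aut: "sv_aut eps \<theta>"
  obtains k where "k = 1 \<or> k = -1" "\<theta> (sv_L 0) = sv_scale (of_int k) (sv_L 0)"
proof -
  define h where "h = \<theta> (sv_L 0)"
  note lin = sv_aut_linear[OF aut] and parity = sv_aut_basis_parity[OF aut]
  obtain k where ak: "Lco (\<theta> (sv_L 0)) 0 * of_int k = 1"
    and L_degree: "\<And>m n. Lco (\<theta> (sv_L m)) n \<noteq> 0 \<Longrightarrow> n = k * m"
    and C_degree: "\<And>n. Lco (\<theta> sv_C) n \<noteq> 0 \<Longrightarrow> n = 0"
    using sv_aut_image_degrees[OF aut] by metis
  have "\<forall>n. Lco (\<theta> y) n \<noteq> 0 \<longrightarrow> k dvd n" if "y \<in> SVir eps" for y
    using lin that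
  proof (induction rule: sv_linear_image_induct)
    case (basis b)
    then show ?case
      by (cases rule: sv_basisE) (use L_degree C_degree parity in fastforce)+
  qed (auto, metis add.left_neutral)
  moreover obtain y where "y \<in> SVir eps" "\<theta> y = sv_L 1" using sv_aut_onto[OF aut, of "sv_L 1"] by auto
  ultimately have "k dvd 1" by (metis sv_coord_simps(10) one_neq_zero)
  then have k: "k = 1 \<or> k = -1" by (auto simp: zdvd1_eq)
  have "sv_bracket (\<theta> (sv_L 1)) (\<theta> (sv_L (-1))) = sv_scale 2 h"
    unfolding h_def
    using sv_aut_bracket[OF aut, of "sv_L 1" "sv_L (-1)"] sv_bracket_L1_Lm1 sv_linearD(3)[OF lin] by simp
  moreover have "Cco (sv_bracket (\<theta> (sv_L 1)) (\<theta> (sv_L (-1)))) = 0"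
    by (rule Cco_sv_bracket_L_pm1[of _ k]) (use k L_degree in \<open>auto simp: parity\<close>)
  ultimately have "Cco h = 0" by (metis sv_coord_simps(6) mult_eq_0_iff zero_neq_numeral)
  moreover have "Lco h 0 = of_int k" using ak k by (auto simp: h_def minus_equation_iff)
  moreover have "sv_Cartan h" unfolding h_def by (rule sv_aut_L0_Cartan[OF aut])
  ultimately have "h = sv_scale (of_int k) (sv_L 0)"
    by (intro sv_eqI) (auto simp: sv_Cartan_def)
  then show thesis using that k by (simp add: h_def)
qed


text \<open>Both signs of \<open>k\<close> occur: \<open>L_m \<mapsto> -L_{-m}\<close>, \<open>G_r \<mapsto> i G_{-r}\<close>, \<open>C \<mapsto> -C\<close> is an automorphism.\<close>

definition sv_diagonal :: "real \<Rightarrow> int \<Rightarrow> (svel \<Rightarrow> svel) \<Rightarrow> bool" where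
  "sv_diagonal eps k f \<longleftrightarrow> (k = 1 \<or> k = -1)
     \<and> (\<forall>m. \<exists>c. f (sv_L m) = sv_scale c (sv_L (k * m)))
     \<and> (\<forall>r. r - eps \<in> \<int> \<longrightarrow> (\<exists>c. f (sv_G r) = sv_scale c (sv_G (of_int k * r))))
     \<and> (\<exists>c. f sv_C = sv_scale c sv_C)"

lemma sv_aut_image_basis:
  assumes aut: "sv_aut eps \<theta>" and k: "k = 1 \<or> k = -1"
    and h: "\<theta> (sv_L 0) = sv_scale (of_int k) (sv_L 0)"
  shows "\<theta> (sv_L m) = sv_scale (Lco (\<theta> (sv_L m)) (k * m)) (sv_L (k * m))"
    and "r - eps \<in> \<int> \<Longrightarrow> \<theta> (sv_G r) = sv_scale (Gco (\<theta> (sv_G r)) (of_int k * r)) (sv_G (of_int k * r))"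
    and "sv_Cartan (\<theta> sv_C)"
proof -
  note parity = sv_aut_basis_parity[OF aut] and ad_L0 = sv_aut_ad_L0_basis[OF aut]
  have kk: "of_int k * of_int k = (1 :: 'a :: ring_1)" using k by auto
  have "sv_Cartan (\<theta> (sv_L 0))" and h0: "Lco (\<theta> (sv_L 0)) 0 = of_int k" by (simp_all add: h)
  note eigen = Cartan_eigenvector_coords[OF this(1), unfolded h0]
  have L_degree: "n = k * m" if "Lco (\<theta> (sv_L m)) n \<noteq> 0" for m n
    using eigen(1)[OF ad_L0(1) that] by (intro int_eq_times_inverse[of "of_int k"] kk) simp_all
  have L_central: "Cco (\<theta> (sv_L m)) = 0" for m
    using eigen(3)[OF ad_L0(1), of m] by (cases "m = 0") (auto simp: h)
  show "\<theta> (sv_L m) = sv_scale (Lco (\<theta> (sv_L m)) (k * m)) (sv_L (k * m))"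
    by (rule sv_eqI) (auto simp: parity L_central dest: L_degree)
  show "\<theta> (sv_G r) = sv_scale (Gco (\<theta> (sv_G r)) (of_int k * r)) (sv_G (of_int k * r))"
    if r: "r - eps \<in> \<int>"
  proof -
    have "of_int k * t = r" if "Gco (\<theta> (sv_G r)) t \<noteq> 0" for t
      using eigen(2)[OF ad_L0(2)[OF r] that] of_real_eq_iff by fastforce
    then have G_degree: "t = of_int k * r" if "Gco (\<theta> (sv_G r)) t \<noteq> 0" for t
      using kk that by (metis mult.assoc mult_1)
    show ?thesis by (rule sv_eqI) (auto simp: parity r dest: G_degree)
  qed
  have "n = 0" if "Lco (\<theta> sv_C) n \<noteq> 0" for n
    using eigen(1)[OF ad_L0(3) that] k by auto
  then show "sv_Cartan (\<theta> sv_C)" by (auto simp: parity sv_Cartan_def)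
qed

text \<open>The \<open>L_0\<close>-component of \<open>\<theta>(C)\<close> vanishes since \<open>\<theta>(C)\<close> is central and \<open>\<theta>(L_1) \<noteq> 0\<close> has degree \<open>k \<noteq> 0\<close>.\<close>

lemma sv_aut_diagonal:
  assumes aut: "sv_aut eps \<theta>"
  obtains k where "sv_diagonal eps k \<theta>" "\<theta> (sv_L 0) = sv_scale (of_int k) (sv_L 0)"
proof -
  obtain k where k: "k = 1 \<or> k = -1" and h: "\<theta> (sv_L 0) = sv_scale (of_int k) (sv_L 0)"
    by (rule sv_aut_L0[OF aut])
  note image = sv_aut_image_basis[OF aut k h]
  have "Lco (\<theta> (sv_L 1)) k \<noteq> 0"
    using image(1)[of 1] sv_aut_eq_zero[OF aut, of "sv_L 1"] by (auto simp: sv_scale_zero)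
  moreover have "sv_bracket (\<theta> sv_C) (\<theta> (sv_L 1)) = sv_zero"
    using sv_aut_bracket[OF aut, of sv_C "sv_L 1"] sv_linear_zero[OF sv_aut_linear[OF aut]]
    by (simp add: sv_bracket_C)
  then have "Lco (sv_bracket (\<theta> sv_C) (\<theta> (sv_L 1))) k = 0" by simp
  then have "Lco (\<theta> sv_C) 0 * of_int k * Lco (\<theta> (sv_L 1)) k = 0"
    by (simp add: sv_bracket_Cartan[OF image(3)])
  ultimately have "Lco (\<theta> sv_C) 0 = 0" using k by auto
  then have "Lco (\<theta> sv_C) m = 0" for m using image(3) by (cases "m = 0") (auto simp: sv_Cartan_def)
  then have "\<theta> sv_C = sv_scale (Cco (\<theta> sv_C)) sv_C"
    using image(3) by (intro sv_eqI) (auto simp: sv_Cartan_def)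
  then have "sv_diagonal eps k \<theta>" unfolding sv_diagonal_def using k image(1,2) by blast
  then show thesis using that h by blast
qed

definition sv_diagonal_action :: "int \<Rightarrow> (svel \<Rightarrow> svel) \<Rightarrow> svel \<Rightarrow> svel" where
  "sv_diagonal_action k f y =
     ((\<lambda>n. Lco (f (sv_L (k * n))) n * Lco y (k * n)),
      (\<lambda>t. Gco (f (sv_G (of_int k * t))) t * Gco y (of_int k * t)),
      Cco (f sv_C) * Cco y)"

lemma sv_diagonal_sign: "sv_diagonal eps k f \<Longrightarrow> k = 1 \<or> k = -1"
  by (simp add: sv_diagonal_def)

lemma sv_diagonal_action_basis:
  assumes d: "sv_diagonal eps k f" and b: "b \<in> sv_basis eps"
  shows "f b = sv_diagonal_action k f b"
proof -
  have k: "k * (k * m) = m" "of_int k * (of_int k * t) = t" for m and t :: real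
    using sv_diagonal_sign[OF d] by auto
  from b show ?thesis
  proof (cases rule: sv_basisE)
    case (L m)
    then obtain c where "f b = sv_scale c (sv_L (k * m))" using d by (auto simp: sv_diagonal_def)
    then show ?thesis by (intro sv_eqI) (auto simp: sv_diagonal_action_def L k)
  next
    case (G r)
    then obtain c where "f b = sv_scale c (sv_G (of_int k * r))" using d by (auto simp: sv_diagonal_def)
    then show ?thesis by (intro sv_eqI) (auto simp: sv_diagonal_action_def G k)
  next
    case C
    then obtain c where "f b = sv_scale c sv_C" using d by (auto simp: sv_diagonal_def)
    then show ?thesis by (intro sv_eqI) (auto simp: sv_diagonal_action_def C)
  qed
qed

lemma sv_diagonal_apply:
  assumes f: "sv_linear eps f" and d: "sv_diagonal eps k f" and y: "y \<in> SVir eps"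
  shows "f y = sv_diagonal_action k f y"
  using y
proof (induction rule: SVir_induct)
  case zero
  show ?case by (rule sv_eqI) (simp_all add: sv_linear_zero[OF f] sv_diagonal_action_def)
next
  case (add_basis x b c)
  then have "f (sv_add (sv_scale c b) x)
      = sv_add (sv_scale c (sv_diagonal_action k f b)) (sv_diagonal_action k f x)"
    using sv_diagonal_action_basis[OF d] sv_basis_in_SVir by (simp add: sv_linearD[OF f])
  then show ?case by (simp add: sv_eq_iff sv_diagonal_action_def algebra_simps)
qed

lemma sv_diagonal_Lco_degree_zero:
  assumes d: "sv_diagonal eps k f" and b: "b \<in> sv_basis eps" "b \<noteq> sv_L 0"
  shows "Lco (f b) 0 = 0"
proof -
  have "Lco (f b) 0 = Lco (f (sv_L 0)) 0 * Lco b 0"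
    by (subst sv_diagonal_action_basis[OF d b(1)]) (simp add: sv_diagonal_action_def)
  also have "Lco b 0 = 0" using b by (cases rule: sv_basisE) auto
  finally show ?thesis by simp
qed

lemma sv_local_autD:
  assumes "sv_local_aut eps \<phi>"
  shows "sv_linear eps \<phi>" and "x \<in> SVir eps \<Longrightarrow> \<exists>\<theta>. sv_aut eps \<theta> \<and> \<phi> x = \<theta> x"
  using assms by (simp_all add: sv_local_aut_def)

text \<open>Test \<open>\<phi>\<close> on \<open>L_0 + b\<close>: the automorphism agreeing with \<open>\<phi>\<close> there has the sign of \<open>\<phi>(L_0)\<close>, because
  neither \<open>\<phi>(b)\<close> nor its own image of \<open>b\<close> has an \<open>L_0\<close>-component.\<close>

lemma sv_local_aut_basis:
  assumes loc: "sv_local_aut eps \<phi>" and k: "\<phi> (sv_L 0) = sv_scale (of_int k) (sv_L 0)"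
    and b: "b \<in> sv_basis eps"
  obtains \<theta> where "sv_aut eps \<theta>" "sv_diagonal eps k \<theta>" "\<phi> b = \<theta> b"
proof (cases "b = sv_L 0")
  case True
  obtain \<theta> where aut: "sv_aut eps \<theta>" and eq: "\<phi> (sv_L 0) = \<theta> (sv_L 0)"
    using sv_local_autD(2)[OF loc, of "sv_L 0"] by auto
  obtain k' where "sv_diagonal eps k' \<theta>" "\<theta> (sv_L 0) = sv_scale (of_int k') (sv_L 0)"
    by (rule sv_aut_diagonal[OF aut])
  moreover from this have "k' = k" using arg_cong[OF k, of "\<lambda>x. Lco x 0"] eq by simp
  ultimately show thesis using that aut eq True by simp
next
  case False
  have bS: "b \<in> SVir eps" by (rule sv_basis_in_SVir[OF b])
  obtain \<theta>b where "sv_aut eps \<theta>b" "\<phi> b = \<theta>b b" using sv_local_autD(2)[OF loc bS] by auto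
  moreover obtain kb where "sv_diagonal eps kb \<theta>b" using sv_aut_diagonal[OF \<open>sv_aut eps \<theta>b\<close>] by auto
  ultimately have \<phi>b0: "Lco (\<phi> b) 0 = 0" using sv_diagonal_Lco_degree_zero[OF _ b False] by simp
  obtain \<theta> where aut: "sv_aut eps \<theta>" and eq: "\<phi> (sv_add (sv_L 0) b) = \<theta> (sv_add (sv_L 0) b)"
    using sv_local_autD(2)[OF loc, of "sv_add (sv_L 0) b"] bS by auto
  obtain k' where d: "sv_diagonal eps k' \<theta>" and k': "\<theta> (sv_L 0) = sv_scale (of_int k') (sv_L 0)"
    by (rule sv_aut_diagonal[OF aut])
  have \<theta>b0: "Lco (\<theta> b) 0 = 0" by (rule sv_diagonal_Lco_degree_zero[OF d b False])
  have "\<phi> (sv_add (sv_L 0) b) = sv_add (sv_scale (of_int k) (sv_L 0)) (\<phi> b)"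
    using sv_linearD(2)[OF sv_local_autD(1)[OF loc] _ bS] k by simp
  moreover have "\<theta> (sv_add (sv_L 0) b) = sv_add (sv_scale (of_int k') (sv_L 0)) (\<theta> b)"
    using sv_linearD(2)[OF sv_aut_linear[OF aut] _ bS] k' by simp
  ultimately have sum_eq:
      "sv_add (sv_scale (of_int k) (sv_L 0)) (\<phi> b) = sv_add (sv_scale (of_int k') (sv_L 0)) (\<theta> b)"
    using eq by simp
  then have "Lco (sv_add (sv_scale (of_int k) (sv_L 0)) (\<phi> b)) 0
      = Lco (sv_add (sv_scale (of_int k') (sv_L 0)) (\<theta> b)) 0"
    by (rule arg_cong)
  then have "k' = k" using \<phi>b0 \<theta>b0 by simp
  then have "\<phi> b = \<theta> b" using sum_eq by (simp add: sv_eq_iff)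
  then show thesis using that aut d \<open>k' = k\<close> by simp
qed

lemma sv_local_aut_diagonal:
  assumes loc: "sv_local_aut eps \<phi>" and k: "\<phi> (sv_L 0) = sv_scale (of_int k) (sv_L 0)"
  shows "sv_diagonal eps k \<phi>"
proof -
  have basis: "\<exists>\<theta>. sv_diagonal eps k \<theta> \<and> \<phi> b = \<theta> b" if "b \<in> sv_basis eps" for b
    using sv_local_aut_basis[OF loc k that] by metis
  obtain \<theta> where "sv_diagonal eps k \<theta>" using basis[of "sv_L 0"] by auto
  then have "k = 1 \<or> k = -1" by (rule sv_diagonal_sign)
  moreover have "\<exists>c. \<phi> (sv_L m) = sv_scale c (sv_L (k * m))" for m
    using basis[of "sv_L m"] by (auto simp: sv_diagonal_def)
  moreover have "\<exists>c. \<phi> (sv_G r) = sv_scale c (sv_G (of_int k * r))" if "r - eps \<in> \<int>" for r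
    using basis[of "sv_G r"] that by (auto simp: sv_diagonal_def)
  moreover have "\<exists>c. \<phi> sv_C = sv_scale c sv_C"
    using basis[of sv_C] by (auto simp: sv_diagonal_def)
  ultimately show ?thesis by (simp add: sv_diagonal_def)
qed

lemma sv_local_aut_basis_nonzero:
  assumes loc: "sv_local_aut eps \<phi>"
  shows "\<forall>b\<in>sv_basis eps. \<phi> b \<noteq> sv_zero"
proof
  fix b assume b: "b \<in> sv_basis eps"
  obtain \<theta> where "sv_aut eps \<theta>" "\<phi> b = \<theta> b"
    using sv_local_autD(2)[OF loc sv_basis_in_SVir[OF b]] by blast
  then show "\<phi> b \<noteq> sv_zero" using sv_aut_eq_zero sv_basis_in_SVir[OF b] sv_basis_nonzero[OF b] by metis
qed

lemma sv_local_aut_inj: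
  assumes loc: "sv_local_aut eps \<phi>"
  shows "inj_on \<phi> (SVir eps)"
proof (rule inj_onI)
  fix x y assume x: "x \<in> SVir eps" and y: "y \<in> SVir eps" and eq: "\<phi> x = \<phi> y"
  define d where "d = sv_add x (sv_scale (-1) y)"
  have dS: "d \<in> SVir eps" using x y by (simp add: d_def)
  have "\<phi> d = sv_zero"
    using x y eq by (simp add: d_def sv_linearD[OF sv_local_autD(1)[OF loc]] sv_eq_iff)
  moreover obtain \<theta> where "sv_aut eps \<theta>" "\<phi> d = \<theta> d" using sv_local_autD(2)[OF loc dS] by blast
  ultimately have "d = sv_zero" using sv_aut_eq_zero dS by metis
  then show "x = y" by (simp add: d_def sv_eq_iff)
qed

lemma sv_local_aut_parity:
  assumes loc: "sv_local_aut eps \<phi>"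
  shows "\<phi> ` sv_even eps \<subseteq> sv_even eps" and "\<phi> ` sv_odd eps \<subseteq> sv_odd eps"
proof -
  have aut_at: "\<exists>\<theta>. sv_aut eps \<theta> \<and> \<phi> x = \<theta> x" if "x \<in> sv_even eps \<or> x \<in> sv_odd eps" for x
  proof -
    have "x \<in> SVir eps" using that by (auto simp: sv_even_def sv_odd_def)
    then show ?thesis by (rule sv_local_autD(2)[OF loc])
  qed
  show "\<phi> ` sv_even eps \<subseteq> sv_even eps" using aut_at sv_aut_even by (metis image_subsetI)
  show "\<phi> ` sv_odd eps \<subseteq> sv_odd eps" using aut_at sv_aut_odd by (metis image_subsetI)
qed

text \<open>\<open>Z + \<epsilon>\<close> is symmetric under negation since \<open>2\<epsilon> \<in> Z\<close>; this is the only use of \<open>\<epsilon> \<in> {0, 1/2}\<close>,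
  needed for the sign \<open>k = -1\<close>.\<close>

lemma Ints_shift_reflect:
  fixes eps s :: real
  assumes eps: "eps \<in> {0, 1/2}" and k: "k = 1 \<or> k = -1" and s: "s - eps \<in> \<int>"
  shows "of_int k * s - eps \<in> \<int>"
proof (cases "k = 1")
  case False
  have "2 * eps = 0 \<or> 2 * eps = 1" using eps by auto
  then have "2 * eps \<in> \<int>" by (metis Ints_0 Ints_1)
  then have "- (s - eps) - 2 * eps \<in> \<int>" using Ints_diff Ints_minus s by blast
  moreover have "- (s - eps) - 2 * eps = of_int k * s - eps" using False k by simp
  ultimately show ?thesis by metis
qed (use s in simp)

lemma sv_diagonal_coeffs_nonzero:
  assumes d: "sv_diagonal eps k f" and nonzero: "\<forall>b\<in>sv_basis eps. f b \<noteq> sv_zero"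
  shows "Lco (f (sv_L (k * n))) n \<noteq> 0"
    and "of_int k * t - eps \<in> \<int> \<Longrightarrow> Gco (f (sv_G (of_int k * t))) t \<noteq> 0"
    and "Cco (f sv_C) \<noteq> 0"
proof -
  have k0: "k \<noteq> 0" using sv_diagonal_sign[OF d] by auto
  note action = sv_diagonal_action_basis[OF d]
  show "Lco (f (sv_L (k * n))) n \<noteq> 0"
  proof
    assume "Lco (f (sv_L (k * n))) n = 0"
    then have "f (sv_L (k * n)) = sv_zero"
      by (subst action) (auto simp: sv_eq_iff sv_diagonal_action_def k0)
    then show False using nonzero by simp
  qed
  show "Gco (f (sv_G (of_int k * t))) t \<noteq> 0" if "of_int k * t - eps \<in> \<int>"
  proof
    assume "Gco (f (sv_G (of_int k * t))) t = 0"
    then have "f (sv_G (of_int k * t)) = sv_zero"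
      by (subst action) (auto simp: sv_eq_iff sv_diagonal_action_def k0 that)
    then show False using nonzero that by simp
  qed
  show "Cco (f sv_C) \<noteq> 0"
  proof
    assume "Cco (f sv_C) = 0"
    then have "f sv_C = sv_zero"
      by (subst action) (auto simp: sv_eq_iff sv_diagonal_action_def)
    then show False using nonzero by simp
  qed
qed

lemma SVir_reflected_support:
  assumes eps: "eps \<in> {0, 1/2}" and k: "k = 1 \<or> k = -1" and y: "y \<in> SVir eps"
    and L: "\<And>m. Lco x m \<noteq> 0 \<Longrightarrow> Lco y (k * m) \<noteq> 0"
    and G: "\<And>r. Gco x r \<noteq> 0 \<Longrightarrow> Gco y (of_int k * r) \<noteq> 0"
  shows "x \<in> SVir eps"
proof (rule SVirI)
  have kk: "k * (k * m) = m" "of_int k * (of_int k * t) = t" for m and t :: real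
    using k by auto
  have "{m. Lco x m \<noteq> 0} \<subseteq> (\<lambda>n. k * n) ` {m. Lco y m \<noteq> 0}"
    using L by (auto intro: image_eqI[where x = "k * m" for m] simp: kk)
  then show "finite {m. Lco x m \<noteq> 0}" by (rule finite_surj[OF SVirD(1)[OF y]])
  have "{r. Gco x r \<noteq> 0} \<subseteq> (\<lambda>t. of_int k * t) ` {r. Gco y r \<noteq> 0}"
    using G by (auto intro: image_eqI[where x = "of_int k * r" for r] simp: kk)
  then show "finite {r. Gco x r \<noteq> 0}" by (rule finite_surj[OF SVirD(2)[OF y]])
  show "r - eps \<in> \<int>" if "Gco x r \<noteq> 0" for r
    using Ints_shift_reflect[OF eps k SVirD(3)[OF y G[OF that]]] by (simp add: kk)
qed

lemma sv_diagonal_onto: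
  assumes eps: "eps \<in> {0, 1/2}" and f: "sv_linear eps f" and d: "sv_diagonal eps k f"
    and nonzero: "\<forall>b\<in>sv_basis eps. f b \<noteq> sv_zero"
  shows "SVir eps \<subseteq> f ` SVir eps"
proof
  fix y assume y: "y \<in> SVir eps"
  have k: "k = 1 \<or> k = -1" by (rule sv_diagonal_sign[OF d])
  then have kk: "k * (k * m) = m" "of_int k * (of_int k * t) = t" for m and t :: real
    by auto
  note coeff = sv_diagonal_coeffs_nonzero[OF d nonzero]
  define x :: svel where "x =
    ((\<lambda>m. Lco y (k * m) / Lco (f (sv_L m)) (k * m)),
     (\<lambda>r. Gco y (of_int k * r) / Gco (f (sv_G r)) (of_int k * r)),
     Cco y / Cco (f sv_C))"
  have "sv_diagonal_action k f x = y"
  proof (rule sv_eqI)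
    fix n show "Lco (sv_diagonal_action k f x) n = Lco y n"
      using coeff(1)[of n] by (simp add: sv_diagonal_action_def x_def kk)
  next
    fix t show "Gco (sv_diagonal_action k f x) t = Gco y t"
      using coeff(2)[OF Ints_shift_reflect[OF eps k], of t] SVirD(3)[OF y, of t]
      by (cases "Gco y t = 0") (simp_all add: sv_diagonal_action_def x_def kk)
  qed (use coeff(3) in \<open>simp add: sv_diagonal_action_def x_def\<close>)
  moreover have "x \<in> SVir eps" by (rule SVir_reflected_support[OF eps k y]) (simp_all add: x_def)
  ultimately show "y \<in> f ` SVir eps" using sv_diagonal_apply[OF f d] by (metis image_eqI)
qed

lemma SVir_covering_vector:
  assumes X: "finite X" "X \<subseteq> SVir eps"
  obtains z where "z \<in> SVir eps" "Lco z 0 = 1" "Cco z = 1"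
    "\<And>x m. x \<in> X \<Longrightarrow> Lco x m \<noteq> 0 \<Longrightarrow> Lco z m = 1"
    "\<And>x r. x \<in> X \<Longrightarrow> Gco x r \<noteq> 0 \<Longrightarrow> Gco z r = 1"
proof -
  define SL where "SL = insert 0 (\<Union>x\<in>X. {m. Lco x m \<noteq> 0})"
  define SG where "SG = (\<Union>x\<in>X. {r. Gco x r \<noteq> 0})"
  define z :: svel where "z = ((\<lambda>n. if n \<in> SL then 1 else 0), (\<lambda>t. if t \<in> SG then 1 else 0), 1)"
  have "z \<in> SVir eps"
  proof (rule SVirI)
    show "finite {m. Lco z m \<noteq> 0}" using X SVirD(1) by (auto simp: z_def SL_def)
    show "finite {r. Gco z r \<noteq> 0}" using X SVirD(2) by (auto simp: z_def SG_def)
    show "r - eps \<in> \<int>" if "Gco z r \<noteq> 0" for r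
      using that X(2) SVirD(3) by (auto simp: z_def SG_def split: if_splits)
  qed
  then show thesis by (rule that) (auto simp: z_def SL_def SG_def)
qed

text \<open>The automorphism agreeing with \<open>\<phi>\<close> on a vector that has coefficient \<open>1\<close> on all basis vectors
  occurring in \<open>X\<close> (and on \<open>L_0\<close>, \<open>C\<close>) agrees with \<open>\<phi>\<close> on \<open>X\<close>: both are diagonal with the same sign,
  so they have the same coefficient on each of these basis vectors.\<close>

lemma sv_local_aut_agree_on_finite:
  assumes loc: "sv_local_aut eps \<phi>" and k: "\<phi> (sv_L 0) = sv_scale (of_int k) (sv_L 0)"
    and X: "finite X" "X \<subseteq> SVir eps"
  obtains \<theta> where "sv_aut eps \<theta>" "\<And>x. x \<in> X \<Longrightarrow> \<phi> x = \<theta> x"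
proof -
  note lin = sv_local_autD(1)[OF loc]
  have d: "sv_diagonal eps k \<phi>" by (rule sv_local_aut_diagonal[OF loc k])
  obtain z where z: "z \<in> SVir eps" "Lco z 0 = 1" "Cco z = 1"
    and zL: "\<And>x m. x \<in> X \<Longrightarrow> Lco x m \<noteq> 0 \<Longrightarrow> Lco z m = 1"
    and zG: "\<And>x r. x \<in> X \<Longrightarrow> Gco x r \<noteq> 0 \<Longrightarrow> Gco z r = 1"
    using SVir_covering_vector[OF X] by metis
  obtain \<theta> where aut: "sv_aut eps \<theta>" and "\<phi> z = \<theta> z" using sv_local_autD(2)[OF loc z(1)] by blast
  obtain k' where d': "sv_diagonal eps k' \<theta>" and k': "\<theta> (sv_L 0) = sv_scale (of_int k') (sv_L 0)"
    by (rule sv_aut_diagonal[OF aut])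
  note lin' = sv_aut_linear[OF aut]
  have z_eq: "sv_diagonal_action k \<phi> z = sv_diagonal_action k' \<theta> z"
    using \<open>\<phi> z = \<theta> z\<close> sv_diagonal_apply[OF lin d z(1)] sv_diagonal_apply[OF lin' d' z(1)] by simp
  then have "Lco (sv_diagonal_action k \<phi> z) 0 = Lco (sv_diagonal_action k' \<theta> z) 0" by simp
  then have "k' = k" using k k' z(2) by (simp add: sv_diagonal_action_def)
  have "\<phi> x = \<theta> x" if x: "x \<in> X" for x
  proof -
    have "Lco (\<phi> (sv_L (k * n))) n * Lco x (k * n) = Lco (\<theta> (sv_L (k * n))) n * Lco x (k * n)" for n
      using arg_cong[OF z_eq, of "\<lambda>u. Lco u n"] zL[OF x, of "k * n"] \<open>k' = k\<close>
      by (cases "Lco x (k * n) = 0") (simp_all add: sv_diagonal_action_def)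
    moreover have "Gco (\<phi> (sv_G (of_int k * t))) t * Gco x (of_int k * t)
        = Gco (\<theta> (sv_G (of_int k * t))) t * Gco x (of_int k * t)" for t
      using arg_cong[OF z_eq, of "\<lambda>u. Gco u t"] zG[OF x, of "of_int k * t"] \<open>k' = k\<close>
      by (cases "Gco x (of_int k * t) = 0") (simp_all add: sv_diagonal_action_def)
    moreover have "Cco (\<phi> sv_C) = Cco (\<theta> sv_C)"
      using arg_cong[OF z_eq, of Cco] z(3) by (simp add: sv_diagonal_action_def)
    ultimately have "sv_diagonal_action k \<phi> x = sv_diagonal_action k \<theta> x"
      by (simp add: sv_eq_iff sv_diagonal_action_def)
    moreover have "x \<in> SVir eps" using x X(2) by blast
    ultimately show ?thesis
      using sv_diagonal_apply[OF lin d] sv_diagonal_apply[OF lin' d'[unfolded \<open>k' = k\<close>]] by simp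
  qed
  then show thesis using that aut by blast
qed

theorem theorem5p3:
  fixes eps :: real and \<phi> :: "svel \<Rightarrow> svel"
  assumes "eps \<in> {0, 1/2}"
    and "sv_local_aut eps \<phi>"
  shows "sv_aut eps \<phi>"
proof -
  note eps = assms(1) and loc = assms(2)
  note lin = sv_local_autD(1)[OF loc]
  obtain \<theta> where "sv_aut eps \<theta>" "\<phi> (sv_L 0) = \<theta> (sv_L 0)" using sv_local_autD(2)[OF loc, of "sv_L 0"] by auto
  then obtain k where k: "\<phi> (sv_L 0) = sv_scale (of_int k) (sv_L 0)" using sv_aut_diagonal by metis
  have "SVir eps \<subseteq> \<phi> ` SVir eps"
    using sv_diagonal_onto[OF eps lin sv_local_aut_diagonal[OF loc k]] sv_local_aut_basis_nonzero[OF loc] .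
  then have bij: "bij_betw \<phi> (SVir eps) (SVir eps)"
    using sv_local_aut_inj[OF loc] sv_linearD(1)[OF lin] by (auto simp: bij_betw_def)
  have "\<phi> (sv_bracket x y) = sv_bracket (\<phi> x) (\<phi> y)" if xy: "x \<in> SVir eps" "y \<in> SVir eps" for x y
  proof -
    obtain \<theta> where "sv_aut eps \<theta>" and "\<And>u. u \<in> {x, y, sv_bracket x y} \<Longrightarrow> \<phi> u = \<theta> u"
      by (rule sv_local_aut_agree_on_finite[OF loc k, of "{x, y, sv_bracket x y}"])
        (use xy SVir_bracket_closed in auto)
    then show ?thesis using sv_aut_bracket xy by simp
  qed
  then show ?thesis unfolding sv_aut_def using lin bij sv_local_aut_parity[OF loc] by blast
qed

end
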